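(* Let $U$ and $M$ be $k\times N$ real matrices, and let $\pi$ be a probability distribution on $[k]$ such that $u_{i,j}=\pi(i)m_{i,j}$ for all $i\in[k]$, $j\in[N]$. Then there exists a probability distribution $\widehat\pi$ on $[k]$, with support contained in the support of $\pi$, such that \[ \|M\|_{\ell_\infty\to L_2(\widehat\pi)}\le4\gamma_2^*(U). \]
   Context: For a distribution $\rho$ on $[k]$, $\|a\|_{L_2(\rho)}=(\sum_v\rho(v)a_v^2)^{1/2}$ and $\|M\|_{\ell_\infty\to L_2(\rho)}=\max_{\|f\|_\infty\le1}\|Mf\|_{L_2(\rho)}$. For matrices, $\|M\|_{1\to2}$ is the largest $\ell_2$ norm of a column and $\|M\|_{2\to\infty}$ the largest $\ell_2$ norm of a row; $\gamma_2(M)=\min\{\|R\|_{2\to\infty}\|A\|_{1\to2}:RA=M\}$; $M\bullet N=\sum_{i,j}m_{i,j}n_{i,j}$; $\gamma_2^*(U)=\max\{U\bullet V:\gamma_2(V)\le1\}$. *)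

theory Defs
  imports Complex_Main
begin

text \<open>Matrices with k rows and N columns are represented as functions
  nat \<Rightarrow> nat \<Rightarrow> real, only the entries with i < k, j < N being relevant.
  Indices of [k] are 0..k-1.\<close>

definition is_distribution :: "nat \<Rightarrow> (nat \<Rightarrow> real) \<Rightarrow> bool" where
  "is_distribution k \<rho> \<longleftrightarrow> (\<forall>i<k. \<rho> i \<ge> 0) \<and> (\<Sum>i<k. \<rho> i) = 1"

definition norm_2_inf :: "nat \<Rightarrow> nat \<Rightarrow> (nat \<Rightarrow> nat \<Rightarrow> real) \<Rightarrow> real" where
  "norm_2_inf k d R = Max (insert 0 ((\<lambda>i. sqrt (\<Sum>l<d. (R i l)\<^sup>2)) ` {..<k}))"

definition norm_1_2 :: "nat \<Rightarrow> nat \<Rightarrow> (nat \<Rightarrow> nat \<Rightarrow> real) \<Rightarrow> real" where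
  "norm_1_2 d N A = Max (insert 0 ((\<lambda>j. sqrt (\<Sum>l<d. (A l j)\<^sup>2)) ` {..<N}))"

definition gamma2 :: "nat \<Rightarrow> nat \<Rightarrow> (nat \<Rightarrow> nat \<Rightarrow> real) \<Rightarrow> real" where
  "gamma2 k N M = Inf {norm_2_inf k d R * norm_1_2 d N A | d R A.
      \<forall>i<k. \<forall>j<N. (\<Sum>l<d. R i l * A l j) = M i j}"

definition frob_inner :: "nat \<Rightarrow> nat \<Rightarrow> (nat \<Rightarrow> nat \<Rightarrow> real) \<Rightarrow> (nat \<Rightarrow> nat \<Rightarrow> real) \<Rightarrow> real" where
  "frob_inner k N M V = (\<Sum>i<k. \<Sum>j<N. M i j * V i j)"

definition gamma2_dual :: "nat \<Rightarrow> nat \<Rightarrow> (nat \<Rightarrow> nat \<Rightarrow> real) \<Rightarrow> real" where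
  "gamma2_dual k N U = Sup {frob_inner k N U V | V. gamma2 k N V \<le> 1}"

definition norm_inf_L2 :: "nat \<Rightarrow> nat \<Rightarrow> (nat \<Rightarrow> real) \<Rightarrow> (nat \<Rightarrow> nat \<Rightarrow> real) \<Rightarrow> real" where
  "norm_inf_L2 k N \<rho> M = Sup {sqrt (\<Sum>i<k. \<rho> i * (\<Sum>j<N. M i j * f j)\<^sup>2) | f.
      \<forall>j<N. \<bar>f j\<bar> \<le> 1}"

end

(*
  For vectors y_j in R^d with norm at most 1, the matrix V_ij = <x_i, y_j>, where x_i is the
  unit vector norming the row sum z_i = sum_j M_ij y_j, has gamma2(V) <= 1; testing U against
  it gives sum_i pi(i) |z_i| <= gamma2*(U).  Taking y_j = (f_1 j, ..., f_T j) / sqrt T for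
  f_1, ..., f_T in the unit cube bounds the pi-average of the root mean square of the row actions
  (M f_l)_i by gamma2*(U).  If no distribution supported in supp pi had
  sum_i p(i) (M f)_i^2 <= 2 gamma2*(U)^2 for every f in the unit cube, exponential weights on
  supp pi would produce f_1, ..., f_T whose mean square action exceeds gamma2*(U)^2 at every
  point of supp pi, contradicting that bound.  The argument gives sqrt 2 in place of 4.
*)
theory Submission
  imports Defs "HOL-Analysis.L2_Norm"
begin

lemma norm_2_inf_nonneg: "0 \<le> norm_2_inf k d R"
  unfolding norm_2_inf_def by (rule Max_ge) auto

lemma norm_1_2_nonneg: "0 \<le> norm_1_2 d N A"
  unfolding norm_1_2_def by (rule Max_ge) auto

lemma row_norm_le_norm_2_inf: "i < k \<Longrightarrow> L2_set (R i) {..<d} \<le> norm_2_inf k d R"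
  unfolding norm_2_inf_def L2_set_def by (rule Max_ge) auto

lemma column_norm_le_norm_1_2: "j < N \<Longrightarrow> L2_set (\<lambda>l. A l j) {..<d} \<le> norm_1_2 d N A"
  unfolding norm_1_2_def L2_set_def by (rule Max_ge) auto

lemma norm_2_inf_le:
  assumes "0 \<le> c" and "\<And>i. i < k \<Longrightarrow> L2_set (R i) {..<d} \<le> c"
  shows "norm_2_inf k d R \<le> c"
  using assms unfolding norm_2_inf_def L2_set_def by (subst Max_le_iff) auto

lemma norm_1_2_le:
  assumes "0 \<le> c" and "\<And>j. j < N \<Longrightarrow> L2_set (\<lambda>l. A l j) {..<d} \<le> c"
  shows "norm_1_2 d N A \<le> c"
  using assms unfolding norm_1_2_def L2_set_def by (subst Max_le_iff) auto

lemma gamma2_le_factorization: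
  assumes "\<forall>i<k. \<forall>j<N. (\<Sum>l<d. R i l * A l j) = M i j"
  shows "gamma2 k N M \<le> norm_2_inf k d R * norm_1_2 d N A"
  unfolding gamma2_def
proof (rule cInf_lower)
  show "norm_2_inf k d R * norm_1_2 d N A \<in> {norm_2_inf k d R * norm_1_2 d N A | d R A.
      \<forall>i<k. \<forall>j<N. (\<Sum>l<d. R i l * A l j) = M i j}"
    using assms by blast
qed (auto intro!: bdd_belowI[of _ 0] mult_nonneg_nonneg norm_2_inf_nonneg norm_1_2_nonneg)

lemma abs_entry_le_gamma2:
  assumes "i < k" and "j < N"
  shows "\<bar>M i j\<bar> \<le> gamma2 k N M"
proof -
  have factorizable: "\<exists>(d::nat) R A. \<forall>i<k. \<forall>j<N. (\<Sum>l<d. R i l * A l j) = M i j"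
    by (intro exI[of _ k] exI[of _ "\<lambda>i l. of_bool (i = l) :: real"] exI[of _ M]) simp
  have "\<bar>M i j\<bar> \<le> norm_2_inf k d R * norm_1_2 d N A"
    if "\<forall>i<k. \<forall>j<N. (\<Sum>l<d. R i l * A l j) = M i j" for d R A
  proof -
    have "\<bar>M i j\<bar> = \<bar>\<Sum>l<d. R i l * A l j\<bar>"
      using that assms by simp
    also have "\<dots> \<le> (\<Sum>l<d. \<bar>R i l\<bar> * \<bar>A l j\<bar>)"
      unfolding abs_mult[symmetric] by (rule sum_abs)
    also have "\<dots> \<le> L2_set (R i) {..<d} * L2_set (\<lambda>l. A l j) {..<d}"
      by (rule L2_set_mult_ineq)
    also have "\<dots> \<le> norm_2_inf k d R * norm_1_2 d N A"
      using assms by (intro mult_mono row_norm_le_norm_2_inf column_norm_le_norm_1_2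
          norm_2_inf_nonneg L2_set_nonneg)
    finally show ?thesis .
  qed
  then show ?thesis
    unfolding gamma2_def using factorizable by (intro cInf_greatest) blast+
qed

lemma frob_inner_le_gamma2_dual:
  assumes "gamma2 k N V \<le> 1"
  shows "frob_inner k N U V \<le> gamma2_dual k N U"
proof -
  have "frob_inner k N U W \<le> (\<Sum>i<k. \<Sum>j<N. \<bar>U i j\<bar>)" if "gamma2 k N W \<le> 1" for W
  proof -
    have "U i j * W i j \<le> \<bar>U i j\<bar>" if "i < k" "j < N" for i j
    proof -
      have "\<bar>W i j\<bar> \<le> 1"
        using abs_entry_le_gamma2[OF that, of W] \<open>gamma2 k N W \<le> 1\<close> by linarith
      then have "\<bar>U i j * W i j\<bar> \<le> \<bar>U i j\<bar>"
        by (simp add: abs_mult mult_left_le)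
      then show ?thesis by linarith
    qed
    then show ?thesis
      unfolding frob_inner_def by (intro sum_mono) auto
  qed
  then have "bdd_above {frob_inner k N U V | V. gamma2 k N V \<le> 1}"
    by (intro bdd_aboveI) blast
  then show ?thesis
    unfolding gamma2_dual_def using assms by (intro cSup_upper) blast+
qed

lemma gamma2_inner_products_le_1:
  fixes d :: nat and x y :: "nat \<Rightarrow> nat \<Rightarrow> real"
  assumes "\<And>i. i < k \<Longrightarrow> L2_set (x i) {..<d} \<le> 1"
    and "\<And>j. j < N \<Longrightarrow> L2_set (y j) {..<d} \<le> 1"
  shows "gamma2 k N (\<lambda>i j. \<Sum>l<d. x i l * y j l) \<le> 1"
proof -
  have "gamma2 k N (\<lambda>i j. \<Sum>l<d. x i l * y j l) \<le> norm_2_inf k d x * norm_1_2 d N (\<lambda>l j. y j l)"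
    by (rule gamma2_le_factorization) simp
  also have "\<dots> \<le> 1"
    using assms by (intro mult_le_one norm_2_inf_le norm_1_2_le norm_1_2_nonneg) auto
  finally show ?thesis .
qed

lemma gamma2_dual_nonneg: "0 \<le> gamma2_dual k N U"
  \<comment> \<open>the zero matrix is the empty Gram matrix (\<open>d = 0\<close>)\<close>
  using frob_inner_le_gamma2_dual[OF gamma2_inner_products_le_1[where d = 0]]
  by (simp add: frob_inner_def)

lemma exists_norming_vector:
  fixes z :: "'a \<Rightarrow> real"
  shows "\<exists>x. L2_set x A \<le> 1 \<and> (\<Sum>l\<in>A. x l * z l) = L2_set z A"
proof (cases "L2_set z A = 0")
  case True
  then show ?thesis by (intro exI[of _ "\<lambda>_. 0"]) (simp add: L2_set_0')
next
  case False
  have square: "(L2_set z A)\<^sup>2 = (\<Sum>l\<in>A. (z l)\<^sup>2)"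
    unfolding L2_set_def by (simp add: sum_nonneg)
  have "(\<Sum>l\<in>A. z l / L2_set z A * z l) = (\<Sum>l\<in>A. (z l)\<^sup>2) / L2_set z A"
    by (simp add: sum_divide_distrib power2_eq_square)
  also have "\<dots> = L2_set z A"
    unfolding square[symmetric] using False by (simp add: power2_eq_square)
  moreover have "L2_set (\<lambda>l. z l / L2_set z A) A = 1"
    using L2_set_left_distrib[of "1 / L2_set z A" z A] False by simp
  ultimately show ?thesis
    by (intro exI[of _ "\<lambda>l. z l / L2_set z A"]) simp
qed

lemma weighted_row_norms_le_gamma2_dual:
  fixes d :: nat and y :: "nat \<Rightarrow> nat \<Rightarrow> real"
  assumes UM: "\<forall>i<k. \<forall>j<N. U i j = \<pi> i * M i j"
    and y: "\<And>j. j < N \<Longrightarrow> L2_set (y j) {..<d} \<le> 1"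
  shows "(\<Sum>i<k. \<pi> i * L2_set (\<lambda>l. \<Sum>j<N. M i j * y j l) {..<d}) \<le> gamma2_dual k N U"
proof -
  define z where "z i = (\<lambda>l. \<Sum>j<N. M i j * y j l)" for i
  have "\<forall>i. \<exists>xi. L2_set xi {..<d} \<le> 1 \<and> (\<Sum>l<d. xi l * z i l) = L2_set (z i) {..<d}"
    using exists_norming_vector by blast
  then obtain x where x: "\<And>i. L2_set (x i) {..<d} \<le> 1"
    and norming: "\<And>i. (\<Sum>l<d. x i l * z i l) = L2_set (z i) {..<d}"
    by metis
  have "(\<Sum>j<N. U i j * (\<Sum>l<d. x i l * y j l)) = \<pi> i * L2_set (z i) {..<d}" if "i < k" for i
  proof -
    have "(\<Sum>j<N. U i j * (\<Sum>l<d. x i l * y j l)) = \<pi> i * (\<Sum>l<d. x i l * z i l)"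
      using UM that by (simp add: z_def sum_distrib_left mult_ac sum.swap[of _ "{..<d}"])
    then show ?thesis by (simp add: norming)
  qed
  then have "frob_inner k N U (\<lambda>i j. \<Sum>l<d. x i l * y j l) = (\<Sum>i<k. \<pi> i * L2_set (z i) {..<d})"
    unfolding frob_inner_def by (intro sum.cong) auto
  moreover have "frob_inner k N U (\<lambda>i j. \<Sum>l<d. x i l * y j l) \<le> gamma2_dual k N U"
    using x y by (intro frob_inner_le_gamma2_dual gamma2_inner_products_le_1)
  ultimately show ?thesis by (simp add: z_def)
qed

lemma weighted_rms_row_actions_le_gamma2_dual:
  fixes f :: "nat \<Rightarrow> nat \<Rightarrow> real"
  assumes UM: "\<forall>i<k. \<forall>j<N. U i j = \<pi> i * M i j"
    and "0 < T" and f: "\<And>l j. l < T \<Longrightarrow> j < N \<Longrightarrow> \<bar>f l j\<bar> \<le> 1"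
  shows "(\<Sum>i<k. \<pi> i * sqrt ((\<Sum>l<T. (\<Sum>j<N. M i j * f l j)\<^sup>2) / T)) \<le> gamma2_dual k N U"
proof -
  define y where "y j l = f l j / sqrt T" for j l
  have "L2_set (y j) {..<T} \<le> 1" if "j < N" for j
  proof -
    have "(\<Sum>l<T. (y j l)\<^sup>2) \<le> (\<Sum>l<T. 1 / T)"
      using f that by (intro sum_mono) (simp add: y_def power_divide abs_square_le_1 divide_right_mono)
    also have "\<dots> = 1" using \<open>0 < T\<close> by simp
    finally show ?thesis by (simp add: L2_set_def)
  qed
  moreover have "L2_set (\<lambda>l. \<Sum>j<N. M i j * y j l) {..<T}
      = sqrt ((\<Sum>l<T. (\<Sum>j<N. M i j * f l j)\<^sup>2) / T)" for i
  proof -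
    have "(\<Sum>j<N. M i j * y j l) = (\<Sum>j<N. M i j * f l j) / sqrt T" for l
      by (simp add: y_def sum_divide_distrib)
    then show ?thesis by (simp add: L2_set_def power_divide flip: sum_divide_distrib)
  qed
  ultimately show ?thesis
    using weighted_row_norms_le_gamma2_dual[OF UM, where d = T and y = y] by simp
qed

lemma exp_minus_le_one_minus_half:
  fixes y :: real
  assumes "0 \<le> y" and "y \<le> 1"
  shows "exp (- y) \<le> 1 - y / 2"
proof -
  have "exp (- y) = 1 / exp y" by (simp add: exp_minus field_simps)
  also have "\<dots> \<le> 1 / (1 + y)"
    using assms by (intro divide_left_mono) auto
  also have "\<dots> \<le> 1 - y / 2"
    using assms mult_left_le[of y y] by (simp add: field_simps)
  finally show ?thesis .
qed

lemma exp_weights_potential_decrease: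
  fixes w a :: "'i \<Rightarrow> real"
  assumes "0 < B"
    and "\<And>i. i \<in> S \<Longrightarrow> 0 \<le> w i"
    and "\<And>i. i \<in> S \<Longrightarrow> 0 \<le> a i \<and> a i \<le> B"
    and "2 * t * (\<Sum>i\<in>S. w i) \<le> (\<Sum>i\<in>S. w i * a i)"
  shows "(\<Sum>i\<in>S. w i * exp (- a i / B)) \<le> (1 - t / B) * (\<Sum>i\<in>S. w i)"
proof -
  have "exp (- a i / B) \<le> 1 - a i / B / 2" if "i \<in> S" for i
  proof -
    have "0 \<le> a i / B" and "a i / B \<le> 1"
      using assms(1) assms(3)[OF that] by auto
    then show ?thesis using exp_minus_le_one_minus_half[of "a i / B"] by simp
  qed
  then have "(\<Sum>i\<in>S. w i * exp (- a i / B)) \<le> (\<Sum>i\<in>S. w i * (1 - a i / B / 2))"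
    using assms(2) by (intro sum_mono mult_left_mono) auto
  also have "\<dots> = (\<Sum>i\<in>S. w i) - (\<Sum>i\<in>S. w i * a i) / (2 * B)"
    by (simp add: algebra_simps sum_subtractf sum_divide_distrib)
  also have "\<dots> \<le> (1 - t / B) * (\<Sum>i\<in>S. w i)"
    using assms(1,4) by (simp add: field_simps)
  finally show ?thesis .
qed

lemma exists_geometric_below_exp:
  fixes x m :: real
  assumes "0 < x" and "x < 1"
  shows "\<exists>T. m * (1 - x) ^ T < exp (- (real T * x))"
proof -
  define r where "r = exp (- x) / (1 - x)"
  have "1 < r"
    using exp_minus_greater[of x] assms by (simp add: r_def)
  then obtain T where "m < r ^ T"
    using real_arch_pow by blast
  then have "m * (1 - x) ^ T < r ^ T * (1 - x) ^ T"
    using assms by (intro mult_strict_right_mono) auto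
  also have "\<dots> = exp (- (real T * x))"
    using assms by (simp add: r_def power_divide exp_of_nat_mult[symmetric])
  finally show ?thesis by blast
qed

lemma exp_weights_potential_bound:
  fixes loss :: "nat \<Rightarrow> 'i \<Rightarrow> real"
  assumes "0 < B" and "t \<le> B"
    and loss: "\<And>s i. i \<in> S \<Longrightarrow> 0 \<le> loss s i \<and> loss s i \<le> B"
    and round: "\<And>s. 2 * t * (\<Sum>i\<in>S. exp (- (\<Sum>r<s. loss r i) / B))
      \<le> (\<Sum>i\<in>S. exp (- (\<Sum>r<s. loss r i) / B) * loss s i)"
  shows "(\<Sum>i\<in>S. exp (- (\<Sum>r<T. loss r i) / B)) \<le> card S * (1 - t / B) ^ T"
proof (induction T)
  case 0
  then show ?case by simp
next
  case (Suc T)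
  have "(\<Sum>i\<in>S. exp (- (\<Sum>r<Suc T. loss r i) / B))
      = (\<Sum>i\<in>S. exp (- (\<Sum>r<T. loss r i) / B) * exp (- loss T i / B))"
    by (simp add: diff_divide_distrib flip: exp_add)
  also have "\<dots> \<le> (1 - t / B) * (\<Sum>i\<in>S. exp (- (\<Sum>r<T. loss r i) / B))"
    using assms(1) loss round by (intro exp_weights_potential_decrease) auto
  also have "\<dots> \<le> (1 - t / B) * (card S * (1 - t / B) ^ T)"
    using Suc assms(1,2) by (intro mult_left_mono) auto
  finally show ?case by (simp add: mult_ac)
qed

lemma exp_weights_cumulative_loss_large:
  fixes loss :: "nat \<Rightarrow> 'i \<Rightarrow> real"
  assumes "finite S" and "S \<noteq> {}" and "0 < t" and "2 * t \<le> B"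
    and loss: "\<And>s i. i \<in> S \<Longrightarrow> 0 \<le> loss s i \<and> loss s i \<le> B"
    and round: "\<And>s. 2 * t * (\<Sum>i\<in>S. exp (- (\<Sum>r<s. loss r i) / B))
      \<le> (\<Sum>i\<in>S. exp (- (\<Sum>r<s. loss r i) / B) * loss s i)"
  shows "\<exists>T>0. \<forall>i\<in>S. real T * t < (\<Sum>r<T. loss r i)"
proof -
  have "0 < B" using assms(3,4) by linarith
  obtain T where T: "card S * (1 - t / B) ^ T < exp (- (real T * (t / B)))"
    using exists_geometric_below_exp[of "t / B"] assms(3,4) by auto
  have "0 < T"
    using T assms(1,2) by (cases T) (auto simp: Suc_le_eq card_gt_0_iff)
  moreover have "real T * t < (\<Sum>r<T. loss r i)" if "i \<in> S" for i
  proof -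
    have "exp (- (\<Sum>r<T. loss r i) / B) \<le> (\<Sum>i\<in>S. exp (- (\<Sum>r<T. loss r i) / B))"
      using assms(1) that by (intro member_le_sum) auto
    also have "\<dots> \<le> card S * (1 - t / B) ^ T"
      using \<open>0 < B\<close> assms(3,4) loss round by (intro exp_weights_potential_bound) auto
    also have "\<dots> < exp (- (real T * (t / B)))"
      by (fact T)
    finally show ?thesis using \<open>0 < B\<close> by (simp add: field_simps)
  qed
  ultimately show ?thesis by blast
qed

lemma exponential_weights:
  fixes a :: "'i \<Rightarrow> 'x \<Rightarrow> real"
  assumes "finite S" and "S \<noteq> {}" and "0 < t"
    and a: "\<And>i x. i \<in> S \<Longrightarrow> x \<in> X \<Longrightarrow> 0 \<le> a i x \<and> a i x \<le> B"
    and response: "\<And>p. (\<forall>i\<in>S. 0 \<le> p i) \<Longrightarrow> (\<Sum>i\<in>S. p i) = 1 \<Longrightarrow>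
      \<exists>x\<in>X. 2 * t \<le> (\<Sum>i\<in>S. p i * a i x)"
  shows "\<exists>T>0. \<exists>xs. (\<forall>l<T. xs l \<in> X) \<and> (\<forall>i\<in>S. real T * t < (\<Sum>l<T. a i (xs l)))"
proof -
  obtain F where F: "\<And>p. (\<forall>i\<in>S. 0 \<le> p i) \<Longrightarrow> (\<Sum>i\<in>S. p i) = 1 \<Longrightarrow>
      F p \<in> X \<and> 2 * t \<le> (\<Sum>i\<in>S. p i * a i (F p))"
    using response by metis
  obtain x where x: "x \<in> X" and x_response: "2 * t \<le> (\<Sum>i\<in>S. 1 / card S * a i x)"
    using response[of "\<lambda>_. 1 / card S"] assms(1,2) by auto
  have "(\<Sum>i\<in>S. 1 / card S * a i x) \<le> (\<Sum>i\<in>S. 1 / card S * B)"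
    using a x by (intro sum_mono mult_left_mono) auto
  then have "2 * t \<le> B" using x_response assms(1,2) by simp
  \<comment> \<open>\<open>L s i\<close> is the loss of \<open>i\<close> accumulated over \<open>s\<close> rounds, each round playing the
    response \<open>F\<close> to the normalised weights \<open>exp (- L s i / B)\<close>.\<close>
  define L where "L = rec_nat (\<lambda>_. 0)
    (\<lambda>_ L i. L i + a i (F (\<lambda>i. exp (- L i / B) / (\<Sum>l\<in>S. exp (- L l / B)))))"
  define xs where "xs s = F (\<lambda>i. exp (- L s i / B) / (\<Sum>l\<in>S. exp (- L s l / B)))" for s
  have L_eq: "L s = (\<lambda>i. \<Sum>r<s. a i (xs r))" for s
    by (induction s) (simp_all add: L_def xs_def)
  have xs: "xs s \<in> X"
    and round: "2 * t * (\<Sum>i\<in>S. exp (- L s i / B)) \<le> (\<Sum>i\<in>S. exp (- L s i / B) * a i (xs s))"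
    for s
  proof -
    have "0 < (\<Sum>l\<in>S. exp (- L s l / B))"
      using assms(1,2) by (intro sum_pos) auto
    then show "xs s \<in> X"
      and "2 * t * (\<Sum>i\<in>S. exp (- L s i / B)) \<le> (\<Sum>i\<in>S. exp (- L s i / B) * a i (xs s))"
      using F[of "\<lambda>i. exp (- L s i / B) / (\<Sum>l\<in>S. exp (- L s l / B))"]
      by (simp_all add: xs_def sum_divide_distrib[symmetric] field_simps)
  qed
  have "\<exists>T>0. \<forall>i\<in>S. real T * t < (\<Sum>r<T. a i (xs r))"
  proof (rule exp_weights_cumulative_loss_large)
    show "2 * t * (\<Sum>i\<in>S. exp (- (\<Sum>r<s. a i (xs r)) / B))
        \<le> (\<Sum>i\<in>S. exp (- (\<Sum>r<s. a i (xs r)) / B) * a i (xs s))" for s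
      using round[of s] by (simp add: L_eq)
  qed (use assms(1-3) a xs \<open>2 * t \<le> B\<close> in auto)
  then show ?thesis using xs by blast
qed

lemma less_weighted_sum_of_distribution:
  assumes "is_distribution k \<pi>" and "\<And>i. i < k \<Longrightarrow> \<pi> i \<noteq> 0 \<Longrightarrow> c < g i"
  shows "c < (\<Sum>i<k. \<pi> i * g i)"
proof -
  have nonneg: "\<And>i. i < k \<Longrightarrow> 0 \<le> \<pi> i" and total: "(\<Sum>i<k. \<pi> i) = 1"
    using assms(1) by (auto simp: is_distribution_def)
  then obtain i where "i < k" and "\<pi> i \<noteq> 0"
    by (metis lessThan_iff sum.neutral zero_neq_one)
  have pos: "0 < \<pi> j * (g j - c)" if "j < k" and "\<pi> j \<noteq> 0" for j
    using nonneg[OF that(1)] assms(2)[OF that] that(2) by simp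
  have "0 \<le> \<pi> j * (g j - c)" if "j < k" for j
    using pos[OF that] by (cases "\<pi> j = 0") auto
  then have "0 < (\<Sum>i<k. \<pi> i * (g i - c))"
    using pos \<open>i < k\<close> \<open>\<pi> i \<noteq> 0\<close> by (intro sum_pos2[of _ i]) auto
  also have "\<dots> = (\<Sum>i<k. \<pi> i * g i) - c"
    using total by (simp add: right_diff_distrib sum_subtractf mult.commute flip: sum_distrib_left)
  finally show ?thesis by simp
qed

lemma norm_inf_L2_le:
  assumes "0 \<le> c"
    and "\<And>f. \<forall>j<N. \<bar>f j\<bar> \<le> 1 \<Longrightarrow> (\<Sum>i<k. \<rho> i * (\<Sum>j<N. M i j * f j)\<^sup>2) \<le> c\<^sup>2"
  shows "norm_inf_L2 k N \<rho> M \<le> c"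
  unfolding norm_inf_L2_def
proof (rule cSup_least)
  show "{sqrt (\<Sum>i<k. \<rho> i * (\<Sum>j<N. M i j * f j)\<^sup>2) | f. \<forall>j<N. \<bar>f j\<bar> \<le> 1} \<noteq> {}"
    by (auto intro!: exI[of _ "\<lambda>_. 0"])
qed (use assms in \<open>auto intro: real_le_lsqrt\<close>)

lemma row_action_square_le:
  fixes M :: "nat \<Rightarrow> nat \<Rightarrow> real" and f :: "nat \<Rightarrow> real"
  assumes "i < k" and "\<forall>j<N. \<bar>f j\<bar> \<le> 1"
  shows "(\<Sum>j<N. M i j * f j)\<^sup>2 \<le> (\<Sum>i<k. \<Sum>j<N. \<bar>M i j\<bar>)\<^sup>2"
proof -
  have "\<bar>\<Sum>j<N. M i j * f j\<bar> \<le> (\<Sum>j<N. \<bar>M i j\<bar> * \<bar>f j\<bar>)"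
    unfolding abs_mult[symmetric] by (rule sum_abs)
  also have "\<dots> \<le> (\<Sum>j<N. \<bar>M i j\<bar>)"
    using assms(2) by (intro sum_mono) (simp add: mult_left_le)
  also have "\<dots> \<le> (\<Sum>i<k. \<Sum>j<N. \<bar>M i j\<bar>)"
    using assms(1) by (intro member_le_sum) (auto intro: sum_nonneg)
  finally show ?thesis
    by (simp add: abs_le_square_iff[symmetric] sum_nonneg)
qed

lemma weighted_row_actions_zero_if_gamma2_dual_zero:
  assumes \<pi>: "is_distribution k \<pi>"
    and UM: "\<forall>i<k. \<forall>j<N. U i j = \<pi> i * M i j"
    and "gamma2_dual k N U = 0" and "\<forall>j<N. \<bar>f j\<bar> \<le> 1"
  shows "(\<Sum>i<k. \<pi> i * (\<Sum>j<N. M i j * f j)\<^sup>2) = 0"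
proof -
  have nonneg: "\<forall>i\<in>{..<k}. 0 \<le> \<pi> i * \<bar>\<Sum>j<N. M i j * f j\<bar>"
    using \<pi> by (simp add: is_distribution_def)
  have "(\<Sum>i<k. \<pi> i * \<bar>\<Sum>j<N. M i j * f j\<bar>) \<le> 0"
    using weighted_rms_row_actions_le_gamma2_dual[OF UM, where T = 1 and f = "\<lambda>_. f"] assms(3,4)
    by simp
  then have "(\<Sum>i<k. \<pi> i * \<bar>\<Sum>j<N. M i j * f j\<bar>) = 0"
    using nonneg by (intro antisym sum_nonneg) auto
  then have "\<forall>i\<in>{..<k}. \<pi> i * \<bar>\<Sum>j<N. M i j * f j\<bar> = 0"
    using nonneg by (subst (asm) sum_nonneg_eq_0_iff) auto
  then show ?thesis
    by (intro sum.neutral) (simp add: power2_eq_square)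
qed

lemma extend_distribution_by_zero:
  fixes p :: "nat \<Rightarrow> real"
  assumes "S \<subseteq> {..<k}" and "\<forall>i\<in>S. 0 \<le> p i" and "(\<Sum>i\<in>S. p i) = 1"
  defines "q \<equiv> \<lambda>i. if i \<in> S then p i else 0"
  shows "is_distribution k q" and "\<And>g. (\<Sum>i<k. q i * g i) = (\<Sum>i\<in>S. p i * g i)"
proof -
  show restrict: "(\<Sum>i<k. q i * g i) = (\<Sum>i\<in>S. p i * g i)" for g
  proof -
    have "(\<Sum>i<k. q i * g i) = (\<Sum>i\<in>S. q i * g i)"
      using assms(1) by (intro sum.mono_neutral_right) (auto simp: q_def)
    then show ?thesis by (simp add: q_def)
  qed
  show "is_distribution k q"
    using assms(2,3) restrict[of "\<lambda>_. 1"] by (auto simp: is_distribution_def q_def)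
qed

lemma exists_support_point_with_small_mean_square_action:
  assumes \<pi>: "is_distribution k \<pi>"
    and UM: "\<forall>i<k. \<forall>j<N. U i j = \<pi> i * M i j"
    and "0 < T" and fs: "\<And>l j. l < T \<Longrightarrow> j < N \<Longrightarrow> \<bar>fs l j\<bar> \<le> 1"
  shows "\<exists>i<k. \<pi> i \<noteq> 0 \<and>
    (\<Sum>l<T. (\<Sum>j<N. M i j * fs l j)\<^sup>2) \<le> real T * (gamma2_dual k N U)\<^sup>2"
proof (rule ccontr)
  assume "\<not> ?thesis"
  then have "(gamma2_dual k N U)\<^sup>2 < (\<Sum>l<T. (\<Sum>j<N. M i j * fs l j)\<^sup>2) / T"
    if "i < k" and "\<pi> i \<noteq> 0" for i
    using that \<open>0 < T\<close> by (auto simp: not_le field_simps)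
  then have "gamma2_dual k N U < (\<Sum>i<k. \<pi> i * sqrt ((\<Sum>l<T. (\<Sum>j<N. M i j * fs l j)\<^sup>2) / T))"
    by (intro less_weighted_sum_of_distribution[OF \<pi>] real_less_rsqrt)
  moreover have "(\<Sum>i<k. \<pi> i * sqrt ((\<Sum>l<T. (\<Sum>j<N. M i j * fs l j)\<^sup>2) / T)) \<le> gamma2_dual k N U"
    using weighted_rms_row_actions_le_gamma2_dual[OF UM \<open>0 < T\<close>] fs by blast
  ultimately show False by simp
qed

lemma exists_weights_bounding_row_actions:
  assumes \<pi>: "is_distribution k \<pi>"
    and UM: "\<forall>i<k. \<forall>j<N. U i j = \<pi> i * M i j"
  shows "\<exists>p. is_distribution k p \<and> (\<forall>i<k. \<pi> i = 0 \<longrightarrow> p i = 0) \<and>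
    (\<forall>f. (\<forall>j<N. \<bar>f j\<bar> \<le> 1) \<longrightarrow>
      (\<Sum>i<k. p i * (\<Sum>j<N. M i j * f j)\<^sup>2) \<le> 2 * (gamma2_dual k N U)\<^sup>2)"
proof (cases "gamma2_dual k N U = 0")
  case True
  then show ?thesis
    using \<pi> weighted_row_actions_zero_if_gamma2_dual_zero[OF \<pi> UM] by (intro exI[of _ \<pi>]) auto
next
  case False
  define \<gamma> where "\<gamma> = gamma2_dual k N U"
  define S where "S = {i. i < k \<and> \<pi> i \<noteq> 0}"
  define X where "X = {f :: nat \<Rightarrow> real. \<forall>j<N. \<bar>f j\<bar> \<le> 1}"
  define a where "a i f = (\<Sum>j<N. M i j * f j)\<^sup>2" for i f
  have "0 < \<gamma>" using False gamma2_dual_nonneg[of k N U] by (simp add: \<gamma>_def)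
  show ?thesis
  proof (rule ccontr)
    assume "\<not> ?thesis"
    then have response: "\<exists>f\<in>X. 2 * \<gamma>\<^sup>2 < (\<Sum>i<k. p i * a i f)"
      if "is_distribution k p" and "\<forall>i<k. \<pi> i = 0 \<longrightarrow> p i = 0" for p
      using that by (auto simp: X_def a_def \<gamma>_def not_le)
    have "\<exists>T>0. \<exists>fs. (\<forall>l<T. fs l \<in> X) \<and> (\<forall>i\<in>S. real T * \<gamma>\<^sup>2 < (\<Sum>l<T. a i (fs l)))"
    proof (rule exponential_weights)
      show "S \<noteq> {}"
        using \<pi> by (auto simp: S_def is_distribution_def intro: ccontr)
      show "0 \<le> a i f \<and> a i f \<le> (\<Sum>i<k. \<Sum>j<N. \<bar>M i j\<bar>)\<^sup>2" if "i \<in> S" and "f \<in> X" for i f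
        using row_action_square_le that by (auto simp: S_def X_def a_def)
      show "\<exists>f\<in>X. 2 * \<gamma>\<^sup>2 \<le> (\<Sum>i\<in>S. p i * a i f)"
        if "\<forall>i\<in>S. 0 \<le> p i" and "(\<Sum>i\<in>S. p i) = 1" for p
        using extend_distribution_by_zero[of S k p] response that
        by (fastforce simp: S_def intro: less_imp_le)
    qed (use \<open>0 < \<gamma>\<close> in \<open>simp_all add: S_def\<close>)
    then obtain T fs where "0 < T" and "\<forall>l<T. fs l \<in> X"
      and "\<forall>i\<in>S. real T * \<gamma>\<^sup>2 < (\<Sum>l<T. a i (fs l))"
      by blast
    then show False
      using exists_support_point_with_small_mean_square_action[OF \<pi> UM \<open>0 < T\<close>, of fs]
      by (force simp: S_def X_def a_def \<gamma>_def)
  qed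
qed

theorem lemma3p7:
  fixes k N :: nat and U M :: "nat \<Rightarrow> nat \<Rightarrow> real" and \<pi> :: "nat \<Rightarrow> real"
  assumes "is_distribution k \<pi>"
    and "\<forall>i<k. \<forall>j<N. U i j = \<pi> i * M i j"
  shows "\<exists>\<pi>'. is_distribution k \<pi>' \<and> (\<forall>i<k. \<pi> i = 0 \<longrightarrow> \<pi>' i = 0) \<and>
           norm_inf_L2 k N \<pi>' M \<le> 4 * gamma2_dual k N U"
proof -
  obtain p where p: "is_distribution k p" "\<forall>i<k. \<pi> i = 0 \<longrightarrow> p i = 0"
    and bound: "\<And>f. \<forall>j<N. \<bar>f j\<bar> \<le> 1 \<Longrightarrow>
      (\<Sum>i<k. p i * (\<Sum>j<N. M i j * f j)\<^sup>2) \<le> 2 * (gamma2_dual k N U)\<^sup>2"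
    using exists_weights_bounding_row_actions[OF assms] by blast
  have "norm_inf_L2 k N p M \<le> sqrt 2 * gamma2_dual k N U"
    using bound gamma2_dual_nonneg by (intro norm_inf_L2_le) (auto simp: power_mult_distrib)
  also have "\<dots> \<le> 4 * gamma2_dual k N U"
    using gamma2_dual_nonneg sqrt2_less_2 by (intro mult_right_mono) auto
  finally show ?thesis using p by blast
qed

end
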